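(* Let $(S,\alpha)$ be a twisted K3 surface, $d=\mathrm{ord}(\alpha)$, $B\in\frac1dH^2(S,\mathbb Z)$ a B-field lift of $\alpha$. Put $\widetilde M=\langle\widetilde{NS}(S,B),(0,0,-\tfrac1d)\rangle$ and $\widetilde T=\langle T(S,B),y\rangle$, where $y\in T(S,B)^\vee$ represents $\lambda([(0,0,-\frac1d)])$. Let $\lambda_0:D_{\widetilde{NS}(S)}\to D_{T(S)}$ be the natural isomorphism and $\bar\lambda:D_{\widetilde M}\to D_{\widetilde T}$ the isomorphism induced by $\lambda$. Then $$\bar\lambda\circ (e^B\circ\kappa)_* = (e^B)_*\circ\lambda_0:\ D_{\widetilde{NS}(S)}\to D_{\widetilde T},$$ where $(e^B\circ\kappa)_*:D_{\widetilde{NS}(S)}\to D_{\widetilde M}$ and $(e^B)_*:D_{T(S)}\to D_{\widetilde T}$ are induced by the isometries $e^B\circ\kappa:\widetilde{NS}(S)\cong\widetilde M$ and $e^B:T(S)\cong\widetilde T$.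
   Context: $S$ is a complex projective K3 surface with $NS(S)$, $T(S)=NS(S)^\perp\subset H^2(S,\mathbb Z)$ and holomorphic 2-form class $\omega_S$. Mukai lattice $\widetilde H(S,\mathbb Z)=H^0\oplus H^2\oplus H^4$, elements $(a,l,b)$, pairing $((a,l,b),(a',l',b'))=(l,l')-ab'-a'b$; $\widetilde{NS}(S)=H^0\oplus NS(S)\oplus H^4$. $e^B(a,l,b)=(a,l+aB,b+(B,l)+\frac a2(B,B))$. A B-field lift of $\alpha\in \mathrm{Br}(S)\cong H^2(S,\mathbb Q)/(NS(S)_{\mathbb Q}+H^2(S,\mathbb Z))$ is a preimage $B$. $\widetilde{NS}(S,B)=e^B(\omega_S)^\perp\cap\widetilde H(S,\mathbb Z)$, $T(S,B)$ its orthogonal complement in $\widetilde H(S,\mathbb Z)$. $\kappa(a,l,b)=(da,l,b/d)$. It is known that $e^B\circ\kappa$ maps $\widetilde{NS}(S)$ isometrically onto $\widetilde M$ and $e^B$ maps $T(S)$ isometrically onto $\widetilde T$. For an even lattice $L$, $D_L=L^\vee/L$. The natural isometry $\lambda:D_{\widetilde{NS}(S,B)}\to D_{T(S,B)}$ sends $[x]$ to $[y']$ where $x+y'\in\widetilde H(S,\mathbb Z)$; likewise $\lambda_0:D_{\widetilde{NS}(S)}\cong D_{NS(S)}\to D_{T(S)}$ sends $[x]$ to $[y']$ with $x+y'\in H^2(S,\mathbb Z)$. Since $\widetilde M/\widetilde{NS}(S,B)$ is generated by the isotropic element $h=[(0,0,-\frac1d)]$, $D_{\widetilde M}=h^\perp/\langle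 h\rangle$ and $D_{\widetilde T}=\lambda(h)^\perp/\langle\lambda(h)\rangle$; $\bar\lambda$ is the isomorphism induced by $\lambda$ on these subquotients. *)

theory Defs
  imports Complex_Main
begin

section \<open>The K3 lattice (a marking H^2(S,Z) = U^3 + E8(-1)^2)\<close>

text \<open>Cohomology classes in H^2(S,K) (K = Q or C) are coordinate functions
  nat => K, supported on the indices 0..21 (coordinates w.r.t. a Z-basis of
  H^2(S,Z) chosen by a marking).\<close>

definition e8 :: "nat \<Rightarrow> nat \<Rightarrow> int" where
  "e8 i j = (if i = j then 2
     else if (i, j) \<in> {(0,2),(2,0),(2,3),(3,2),(3,4),(4,3),(4,5),(5,4),
                        (5,6),(6,5),(6,7),(7,6),(1,3),(3,1)} then -1 else 0)"

definition k3g :: "nat \<Rightarrow> nat \<Rightarrow> int" where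
  "k3g i j =
    (if i < 6 \<and> j < 6 then (if i div 2 = j div 2 \<and> i \<noteq> j then 1 else 0)
     else if 6 \<le> i \<and> i < 14 \<and> 6 \<le> j \<and> j < 14 then - e8 (i - 6) (j - 6)
     else if 14 \<le> i \<and> i < 22 \<and> 14 \<le> j \<and> j < 22 then - e8 (i - 14) (j - 14)
     else 0)"

definition bil :: "(nat \<Rightarrow> 'a::comm_ring_1) \<Rightarrow> (nat \<Rightarrow> 'a) \<Rightarrow> 'a" where
  "bil x y = (\<Sum>i<22. \<Sum>j<22. of_int (k3g i j) * x i * y j)"

definition H2 :: "(nat \<Rightarrow> rat) set" where
  "H2 = {l. \<forall>i\<ge>22. l i = 0}"

definition H2Z :: "(nat \<Rightarrow> rat) set" where
  "H2Z = {l \<in> H2. \<forall>i<22. l i \<in> \<int>}"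

definition cpx :: "(nat \<Rightarrow> rat) \<Rightarrow> nat \<Rightarrow> complex" where
  "cpx l i = of_rat (l i)"

definition vadd :: "(nat \<Rightarrow> rat) \<Rightarrow> (nat \<Rightarrow> rat) \<Rightarrow> nat \<Rightarrow> rat" where
  "vadd x y i = x i + y i"

definition vsmul :: "rat \<Rightarrow> (nat \<Rightarrow> rat) \<Rightarrow> nat \<Rightarrow> rat" where
  "vsmul c x i = c * x i"

text \<open>NS(S) = omega^perp in H^2(S,Z) (Lefschetz (1,1)), T(S) = NS(S)^perp.\<close>

definition NS :: "(nat \<Rightarrow> complex) \<Rightarrow> (nat \<Rightarrow> rat) set" where
  "NS \<omega> = {l \<in> H2Z. bil \<omega> (cpx l) = 0}"

definition TS :: "(nat \<Rightarrow> complex) \<Rightarrow> (nat \<Rightarrow> rat) set" where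
  "TS \<omega> = {l \<in> H2Z. \<forall>n\<in>NS \<omega>. bil l n = 0}"

definition h2_qspan :: "(nat \<Rightarrow> rat) set \<Rightarrow> (nat \<Rightarrow> rat) set" where
  "h2_qspan L = {x \<in> H2. \<exists>m::nat. m > 0 \<and> vsmul (of_nat m) x \<in> L}"

definition h2_dual :: "(nat \<Rightarrow> rat) set \<Rightarrow> (nat \<Rightarrow> rat) set" where
  "h2_dual L = {x \<in> h2_qspan L. \<forall>v\<in>L. bil x v \<in> \<int>}"

text \<open>A projective K3 surface (marked): period omega with (omega,omega)=0,
  (omega, conj omega) > 0, and NS(S) contains a class of positive square.\<close>

definition K3_period :: "(nat \<Rightarrow> complex) \<Rightarrow> bool" where
  "K3_period \<omega> \<longleftrightarrow> (\<forall>i\<ge>22. \<omega> i = 0) \<and> bil \<omega> \<omega> = 0 \<and>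
     Im (bil \<omega> (\<lambda>i. cnj (\<omega> i))) = 0 \<and> Re (bil \<omega> (\<lambda>i. cnj (\<omega> i))) > 0 \<and>
     (\<exists>h\<in>NS \<omega>. bil h h > 0)"

text \<open>Br(S) = H^2(S,Q) / (NS(S)_Q + H^2(S,Z)); br_zero says the class is 0.\<close>

definition br_zero :: "(nat \<Rightarrow> complex) \<Rightarrow> (nat \<Rightarrow> rat) \<Rightarrow> bool" where
  "br_zero \<omega> x \<longleftrightarrow> (\<exists>p q. p \<in> h2_qspan (NS \<omega>) \<and> q \<in> H2Z \<and> x = vadd p q)"

definition br_ord :: "(nat \<Rightarrow> complex) \<Rightarrow> (nat \<Rightarrow> rat) \<Rightarrow> nat" where
  "br_ord \<omega> B = (LEAST n::nat. n > 0 \<and> br_zero \<omega> (vsmul (of_nat n) B))"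

type_synonym 'a mv = "'a \<times> (nat \<Rightarrow> 'a) \<times> 'a"

definition madd :: "'a::comm_ring_1 mv \<Rightarrow> 'a mv \<Rightarrow> 'a mv" where
  "madd v w = (case v of (a, l, b) \<Rightarrow> case w of (a', l', b') \<Rightarrow>
     (a + a', \<lambda>i. l i + l' i, b + b'))"

definition msub :: "'a::comm_ring_1 mv \<Rightarrow> 'a mv \<Rightarrow> 'a mv" where
  "msub v w = (case v of (a, l, b) \<Rightarrow> case w of (a', l', b') \<Rightarrow>
     (a - a', \<lambda>i. l i - l' i, b - b'))"

definition msmul :: "'a::comm_ring_1 \<Rightarrow> 'a mv \<Rightarrow> 'a mv" where
  "msmul c v = (case v of (a, l, b) \<Rightarrow> (c * a, \<lambda>i. c * l i, c * b))"

definition mpair :: "'a::comm_ring_1 mv \<Rightarrow> 'a mv \<Rightarrow> 'a" where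
  "mpair v w = (case v of (a, l, b) \<Rightarrow> case w of (a', l', b') \<Rightarrow>
     bil l l' - a * b' - a' * b)"

definition mcpx :: "rat mv \<Rightarrow> complex mv" where
  "mcpx v = (case v of (a, l, b) \<Rightarrow> (of_rat a, cpx l, of_rat b))"

definition MZ :: "rat mv set" where
  "MZ = {(a, l, b). a \<in> \<int> \<and> l \<in> H2Z \<and> b \<in> \<int>}"

definition MQ :: "rat mv set" where
  "MQ = {(a, l, b). l \<in> H2}"

definition m_qspan :: "rat mv set \<Rightarrow> rat mv set" where
  "m_qspan L = {x \<in> MQ. \<exists>m::nat. m > 0 \<and> msmul (of_nat m) x \<in> L}"

definition m_dual :: "rat mv set \<Rightarrow> rat mv set" where
  "m_dual L = {x \<in> m_qspan L. \<forall>v\<in>L. mpair x v \<in> \<int>}"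

definition eB :: "(nat \<Rightarrow> 'a::field) \<Rightarrow> 'a mv \<Rightarrow> 'a mv" where
  "eB B v = (case v of (a, l, b) \<Rightarrow>
     (a, \<lambda>i. l i + a * B i, b + bil B l + a / 2 * bil B B))"

definition kappa :: "nat \<Rightarrow> rat mv \<Rightarrow> rat mv" where
  "kappa d v = (case v of (a, l, b) \<Rightarrow> (of_nat d * a, l, b / of_nat d))"

text \<open>NS~(S) = H^0 + NS(S) + H^4.\<close>

definition NSt :: "(nat \<Rightarrow> complex) \<Rightarrow> rat mv set" where
  "NSt \<omega> = {(a, l, b) \<in> MZ. l \<in> NS \<omega>}"

definition NSB :: "(nat \<Rightarrow> complex) \<Rightarrow> (nat \<Rightarrow> rat) \<Rightarrow> rat mv set" where
  "NSB \<omega> B = {v \<in> MZ. mpair (eB (cpx B) (0, \<omega>, 0)) (mcpx v) = 0}"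

definition TB :: "(nat \<Rightarrow> complex) \<Rightarrow> (nat \<Rightarrow> rat) \<Rightarrow> rat mv set" where
  "TB \<omega> B = {v \<in> MZ. \<forall>u\<in>NSB \<omega> B. mpair v u = 0}"

definition gen_by :: "rat mv set \<Rightarrow> rat mv \<Rightarrow> rat mv set" where
  "gen_by L g = {madd u (msmul (of_int k) g) | u k. u \<in> L}"

end

theory Submission
  imports Defs
begin

(*
  Let X = (a,l,b) be in the dual of NS~(S), let y' represent
  lambda_0 [X] (so l + y' is integral) and let z represent lambda [e^B kappa X]
  (so e^B kappa X + z is integral).  We must show z == e^B(y') modulo the
  lattice T~ = <T(S,B), y>.

  Since e^B is additive, e^B kappa X + e^B(y') = e^B (d a, l + y', b/d), and all
  its components are integral except the H^4 component, which equals N/d for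
  an integer N (this uses that d B is integral and that H^2(S,Z) is even).
  As y == (0,0,1/d) modulo the integral lattice, u = z - e^B(y') + N y is
  integral.  Moreover u is orthogonal to NS~(S,B): for z and y this holds by
  duality with T(S,B), and for e^B(y') because e^{-B} carries d NS~(S,B) into
  NS(S), which is orthogonal to y' in the dual of T(S).  Hence u lies in
  T(S,B) and z - e^B(y') = u - N y lies in T~.
*)

section \<open>The intersection form on H^2(S)\<close>

lemma e8_sym: "e8 i j = e8 j i"
  unfolding e8_def by auto

lemma k3g_sym: "k3g i j = k3g j i"
  unfolding k3g_def by (auto simp: e8_sym)

lemma k3g_diag_even: "even (k3g i i)"
  unfolding k3g_def e8_def by auto

lemma bil_sym: "bil x y = bil y x"
  unfolding bil_def by (subst sum.swap) (simp add: k3g_sym mult_ac)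

lemma bil_add_left: "bil (\<lambda>i. x i + y i) z = bil x z + bil y z"
  by (simp add: bil_def algebra_simps sum.distrib)

lemma bil_diff_left: "bil (\<lambda>i. x i - y i) z = bil x z - bil y z"
  by (simp add: bil_def algebra_simps sum_subtractf)

lemma bil_smul_left: "bil (\<lambda>i. c * x i) z = c * bil x z"
  by (simp add: bil_def algebra_simps sum_distrib_left)

lemma bil_add_right: "bil z (\<lambda>i. x i + y i) = bil z x + bil z y"
  by (simp add: bil_sym[of z] bil_add_left)

lemma bil_diff_right: "bil z (\<lambda>i. x i - y i) = bil z x - bil z y"
  by (simp add: bil_sym[of z] bil_diff_left)

lemma bil_smul_right: "bil z (\<lambda>i. c * x i) = c * bil z x"
  by (simp add: bil_sym[of z] bil_smul_left)

lemma bil_Ints: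
  assumes "\<forall>i<22. x i \<in> \<int>" and "\<forall>i<22. y i \<in> \<int>"
  shows "bil x y \<in> \<int>"
  unfolding bil_def using assms by (intro Ints_sum Ints_mult) auto

text \<open>A symmetric integer matrix with even diagonal defines an even quadratic
  form: the off-diagonal terms come in equal pairs.\<close>

lemma quadratic_form_even:
  fixes g :: "nat \<Rightarrow> nat \<Rightarrow> int" and x :: "nat \<Rightarrow> int"
  assumes sym: "\<And>i j. g i j = g j i" and diag: "\<And>i. even (g i i)"
  shows "even (\<Sum>i<n. \<Sum>j<n. g i j * x i * x j)"
proof (induction n)
  case 0
  then show ?case by simp
next
  case (Suc n)
  have pair: "(\<Sum>i<n. g i n * x i * x n) = (\<Sum>j<n. g n j * x n * x j)"
    by (simp add: sym mult_ac)
  have "(\<Sum>i<Suc n. \<Sum>j<Suc n. g i j * x i * x j) =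
      (\<Sum>i<n. \<Sum>j<n. g i j * x i * x j) + 2 * (\<Sum>j<n. g n j * x n * x j)
        + g n n * x n * x n"
    using pair by (simp add: sum.distrib)
  then show ?case using Suc diag by simp
qed

lemma bil_even:
  assumes "\<forall>i<22. x i \<in> \<int>"
  shows "bil x x / 2 \<in> (\<int> :: rat set)"
proof -
  define xi where "xi i = \<lfloor>x i\<rfloor>" for i
  have x_int: "i < 22 \<Longrightarrow> x i = of_int (xi i)" for i
    using assms xi_def by auto
  have "bil x x = of_int (\<Sum>i<22. \<Sum>j<22. k3g i j * xi i * xi j)"
    unfolding bil_def by (simp add: x_int)
  moreover obtain k where "(\<Sum>i<22. \<Sum>j<22. k3g i j * xi i * xi j) = 2 * k"
    using quadratic_form_even[of k3g, OF k3g_sym k3g_diag_even] by blast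
  ultimately show ?thesis by simp
qed

lemma NS_zero: "(\<lambda>_. 0) \<in> NS \<omega>"
  by (simp add: NS_def H2Z_def H2_def cpx_def bil_def)

text \<open>Every rational class has an integral positive multiple (clear the
  denominators of its 22 coordinates).\<close>

lemma H2_integral_multiple:
  assumes "B \<in> H2"
  shows "\<exists>n::int. n > 0 \<and> vsmul (of_int n) B \<in> H2Z"
proof -
  define n where "n = (\<Prod>i<22. snd (quotient_of (B i)))"
  have "n > 0"
    unfolding n_def by (intro prod_pos) (simp add: quotient_of_denom_pos')
  moreover have "of_int n * B i \<in> \<int>" if "i < 22" for i
  proof -
    obtain p q where pq: "quotient_of (B i) = (p, q)" by fastforce
    have "q dvd n"
      unfolding n_def using that pq by (metis dvd_prodI finite_lessThan lessThan_iff snd_conv)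
    then obtain r where r: "n = q * r" by blast
    have "B i = of_int p / of_int q" using pq quotient_of_div by blast
    moreover have "q > 0" using pq quotient_of_denom_pos by blast
    ultimately have "of_int n * B i = of_int (r * p)" using r by (simp add: field_simps)
    then show ?thesis by simp
  qed
  ultimately show ?thesis
    using assms by (auto simp: H2Z_def H2_def vsmul_def)
qed

lemma br_ord_pos:
  assumes "B \<in> H2"
  shows "br_ord \<omega> B > 0"
proof -
  obtain n :: int where n: "n > 0" "vsmul (of_int n) B \<in> H2Z"
    using H2_integral_multiple[OF assms] by blast
  have "(\<lambda>_. 0) \<in> h2_qspan (NS \<omega>)"
  proof -
    have "vsmul 1 (\<lambda>_. 0) = (\<lambda>_. (0::rat))" by (rule ext) (simp add: vsmul_def)
    then show ?thesis using NS_zero by (auto simp: h2_qspan_def H2_def intro!: exI[of _ 1])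
  qed
  then have "br_zero \<omega> (vsmul (of_nat (nat n)) B)"
    unfolding br_zero_def vadd_def using n
    by (intro exI[of _ "\<lambda>_. 0"] exI[of _ "vsmul (of_int n) B"]) auto
  then have "\<exists>k::nat. k > 0 \<and> br_zero \<omega> (vsmul (of_nat k) B)"
    using n by (intro exI[of _ "nat n"]) auto
  then show ?thesis
    unfolding br_ord_def by (metis (mono_tags, lifting) LeastI_ex)
qed

section \<open>The Mukai pairing and the integral Mukai lattice\<close>

lemma mpair_madd_left: "mpair (madd x y) v = mpair x v + mpair y v"
  by (cases x; cases y; cases v) (simp add: madd_def mpair_def bil_add_left algebra_simps)

lemma mpair_msub_left: "mpair (msub x y) v = mpair x v - mpair y v"
  by (cases x; cases y; cases v) (simp add: msub_def mpair_def bil_diff_left algebra_simps)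

lemma mpair_msmul_left: "mpair (msmul c x) v = c * mpair x v"
  by (cases x; cases v) (simp add: msmul_def mpair_def bil_smul_left algebra_simps)

lemma madd_msmul_cancel:
  "madd (madd x (msmul c y)) (msmul (- c) y) = (x :: 'a::comm_ring_1 mv)"
  by (cases x; cases y) (simp add: madd_def msmul_def)

text \<open>Pairing with the image under e^B of a pure H^2 class t: it only sees the
  H^2 component of e^{-B} v.\<close>

lemma mpair_eB_H2:
  "mpair (eB B (0, t, 0)) (v1, v2, v3) = bil t (\<lambda>i. v2 i - v1 * B i)"
proof -
  have "eB B (0, t, 0) = (0, t, bil B t)"
    by (simp add: eB_def)
  then show ?thesis
    by (simp add: mpair_def bil_diff_right bil_smul_right bil_sym[of t B])
qed

lemma m_qspan_orth:
  assumes "x \<in> m_qspan L" and "\<forall>u\<in>L. mpair u v = 0"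
  shows "mpair x v = 0"
proof -
  obtain m :: nat where "m > 0" "msmul (of_nat m) x \<in> L"
    using assms(1) by (auto simp: m_qspan_def)
  then show ?thesis using assms(2) by (auto simp: mpair_msmul_left)
qed

lemma h2_qspan_orth:
  assumes "x \<in> h2_qspan L" and "\<forall>u\<in>L. bil u v = 0"
  shows "bil x v = 0"
proof -
  obtain m :: nat where "m > 0" "vsmul (of_nat m) x \<in> L"
    using assms(1) by (auto simp: h2_qspan_def)
  then show ?thesis using assms(2) by (auto simp: vsmul_def[abs_def] bil_smul_left)
qed

text \<open>The dual of NS~(S) has integral H^0 and H^4 components, since it pairs
  integrally with the vectors (1,0,0) and (0,0,1) of NS~(S).\<close>

lemma NSt_dual_components:
  assumes "(a, l, b) \<in> m_dual (NSt \<omega>)"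
  shows "a \<in> \<int>" and "b \<in> \<int>"
proof -
  have "(1, \<lambda>_. 0, 0) \<in> NSt \<omega>" and "(0, \<lambda>_. 0, 1) \<in> NSt \<omega>"
    using NS_zero by (auto simp: NSt_def MZ_def NS_def)
  then have "mpair (a, l, b) (1, \<lambda>_. 0, 0) \<in> \<int>" and "mpair (a, l, b) (0, \<lambda>_. 0, 1) \<in> \<int>"
    using assms by (auto simp: m_dual_def)
  then show "a \<in> \<int>" and "b \<in> \<int>" by (auto simp: mpair_def bil_def)
qed

lemma MZ_madd: "x \<in> MZ \<Longrightarrow> y \<in> MZ \<Longrightarrow> madd x y \<in> MZ"
  by (cases x; cases y) (auto simp: MZ_def H2Z_def H2_def madd_def)

lemma MZ_msub: "x \<in> MZ \<Longrightarrow> y \<in> MZ \<Longrightarrow> msub x y \<in> MZ"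
  by (cases x; cases y) (auto simp: MZ_def H2Z_def H2_def msub_def)

lemma MZ_msmul: "c \<in> \<int> \<Longrightarrow> x \<in> MZ \<Longrightarrow> msmul c x \<in> MZ"
  by (cases x) (auto simp: MZ_def H2Z_def H2_def msmul_def)

lemma MZ_shift:
  fixes E z e W y :: "rat mv" and N :: rat and d :: nat
  assumes Ez: "madd E z \<in> MZ"
    and Ee: "madd E e = madd W (0, \<lambda>_. 0, N / of_nat d)"
    and W: "W \<in> MZ"
    and y: "madd (0, \<lambda>_. 0, - 1 / of_nat d) y \<in> MZ"
    and N: "N \<in> \<int>" and d: "d > 0"
  shows "madd (msub z e) (msmul N y) \<in> MZ"
proof -
  have "madd (msub z e) (msmul N y) =
      madd (msub (madd E z) W) (msmul N (madd (0, \<lambda>_. 0, - 1 / of_nat d) y))"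
  proof -
    obtain E1 E2 E3 where E: "E = (E1, E2, E3)" by (cases E)
    obtain e1 e2 e3 where e: "e = (e1, e2, e3)" by (cases e)
    obtain W1 W2 W3 where W: "W = (W1, W2, W3)" by (cases W)
    have "e1 = W1 - E1" "e2 = (\<lambda>i. W2 i - E2 i)" "e3 = W3 + N / of_nat d - E3"
      using Ee by (auto simp: E e W madd_def fun_eq_iff algebra_simps)
    then show ?thesis
      using d by (cases z; cases y) (simp add: E e W madd_def msub_def msmul_def field_simps)
  qed
  also have "\<dots> \<in> MZ"
    by (rule MZ_madd[OF MZ_msub[OF Ez W] MZ_msmul[OF N y]])
  finally show ?thesis .
qed

section \<open>Orthogonality to the twisted Neron-Severi lattice\<close>

text \<open>e^{-B} maps d NS~(S,B) into NS(S): for v = (v1,v2,v3) in NS~(S,B) the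
  class d (v2 - v1 B) is integral (as d B is) and orthogonal to omega (as v is
  orthogonal to e^B omega).\<close>

lemma NSB_untwist:
  assumes v: "(v1, v2, v3) \<in> NSB \<omega> B" and B_H2: "B \<in> H2"
    and dB: "vsmul (of_nat d) B \<in> H2Z"
  shows "vsmul (of_nat d) (\<lambda>i. v2 i - v1 * B i) \<in> NS \<omega>"
proof -
  define w where "w = (\<lambda>i. v2 i - v1 * B i)"
  have v1: "v1 \<in> \<int>" and v2: "v2 \<in> H2Z"
    using v by (auto simp: NSB_def MZ_def)
  have "cpx w = (\<lambda>i. cpx v2 i - of_rat v1 * cpx B i)"
    by (rule ext) (simp add: w_def cpx_def of_rat_diff of_rat_mult)
  then have "bil \<omega> (cpx w) = mpair (eB (cpx B) (0, \<omega>, 0)) (mcpx (v1, v2, v3))"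
    by (simp add: mcpx_def mpair_eB_H2)
  also have "\<dots> = 0"
    using v by (simp add: NSB_def)
  finally have omega_orth: "bil \<omega> (cpx w) = 0" .
  have "of_nat d * w i \<in> \<int>" if "i < 22" for i
  proof -
    have "of_nat d * w i = of_nat d * v2 i - v1 * (of_nat d * B i)"
      by (simp add: w_def algebra_simps)
    then show ?thesis
      using v1 v2 dB that by (auto simp: H2Z_def vsmul_def)
  qed
  moreover have "w \<in> H2"
    using v2 B_H2 by (auto simp: w_def H2Z_def H2_def)
  moreover have "cpx (vsmul (of_nat d) w) = (\<lambda>i. of_nat d * cpx w i)"
    by (rule ext) (simp add: cpx_def vsmul_def of_rat_mult)
  ultimately have "vsmul (of_nat d) w \<in> NS \<omega>"
    using omega_orth by (auto simp: NS_def H2Z_def H2_def vsmul_def bil_smul_right)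
  then show ?thesis by (simp add: w_def)
qed

lemma TS_dual_eB_orth:
  assumes y': "y' \<in> h2_dual (TS \<omega>)" and v: "v \<in> NSB \<omega> B" and B_H2: "B \<in> H2"
    and dB: "vsmul (of_nat d) B \<in> H2Z" and d: "d > 0"
  shows "mpair (eB B (0, y', 0)) v = 0"
proof -
  obtain v1 v2 v3 where v_eq: "v = (v1, v2, v3)" by (cases v)
  have "vsmul (of_nat d) (\<lambda>i. v2 i - v1 * B i) \<in> NS \<omega>"
    using NSB_untwist v B_H2 dB by (simp add: v_eq)
  then have "bil y' (vsmul (of_nat d) (\<lambda>i. v2 i - v1 * B i)) = 0"
    using y' h2_qspan_orth[of y' "TS \<omega>"] by (auto simp: h2_dual_def TS_def)
  then have "of_nat d * bil y' (\<lambda>i. v2 i - v1 * B i) = 0"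
    by (simp add: vsmul_def[abs_def] bil_smul_right)
  then show ?thesis
    using d by (simp add: v_eq mpair_eB_H2)
qed

lemma TB_dual_orth:
  assumes "z \<in> m_dual (TB \<omega> B)" and "v \<in> NSB \<omega> B"
  shows "mpair z v = 0"
  using assms m_qspan_orth[of z "TB \<omega> B" v] by (auto simp: m_dual_def TB_def)

section \<open>The correction term\<close>

text \<open>For X = (a,l,b) and a class t, the integer N with
  e^B kappa X + e^B t == (0,0,N/d) modulo the integral lattice.\<close>

definition twist_corr :: "nat \<Rightarrow> (nat \<Rightarrow> rat) \<Rightarrow> rat mv \<Rightarrow> (nat \<Rightarrow> rat) \<Rightarrow> rat" where
  "twist_corr d B X t = (case X of (a, l, b) \<Rightarrow>
     b + bil (vsmul (of_nat d) B) (vadd l t)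
       + a * (bil (vsmul (of_nat d) B) (vsmul (of_nat d) B) / 2))"

text \<open>N is an integer: this is where the evenness of H^2(S,Z) enters.\<close>

lemma twist_corr_Ints:
  assumes "a \<in> \<int>" and "b \<in> \<int>" and dB: "vsmul (of_nat d) B \<in> H2Z"
    and lt: "vadd l t \<in> H2Z"
  shows "twist_corr d B (a, l, b) t \<in> \<int>"
proof -
  have dB_int: "\<forall>i<22. vsmul (of_nat d) B i \<in> \<int>" and lt_int: "\<forall>i<22. vadd l t i \<in> \<int>"
    using dB lt by (auto simp: H2Z_def)
  show ?thesis
    unfolding twist_corr_def prod.case
    using assms bil_Ints[OF dB_int lt_int] bil_even[OF dB_int] by (intro Ints_add Ints_mult)
qed

lemma eB_kappa_plus_eB:
  assumes d: "d > 0"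
  shows "madd (eB B (kappa d (a, l, b))) (eB B (0, t, 0)) =
    (of_nat d * a, \<lambda>i. vadd l t i + a * vsmul (of_nat d) B i,
     twist_corr d B (a, l, b) t / of_nat d)"
proof -
  have lin: "bil (vsmul (of_nat d) B) (vadd l t) = of_nat d * (bil B l + bil B t)"
    by (simp add: vsmul_def[abs_def] vadd_def[abs_def] bil_smul_left bil_add_right)
  have quad: "bil (vsmul (of_nat d) B) (vsmul (of_nat d) B) = of_nat d * (of_nat d * bil B B)"
    by (simp add: vsmul_def[abs_def] bil_smul_left bil_smul_right)
  show ?thesis
    using d by (simp add: eB_def kappa_def madd_def twist_corr_def lin quad vadd_def vsmul_def
        fun_eq_iff field_simps)
qed

lemma twisted_difference_in_TB:
  assumes B_H2: "B \<in> H2" and dB: "vsmul (of_nat d) B \<in> H2Z" and d: "d > 0"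
    and y_dual: "y \<in> m_dual (TB \<omega> B)"
    and y_rep: "madd (0, \<lambda>_. 0, - 1 / of_nat d) y \<in> MZ"
    and X: "(a, l, b) \<in> m_dual (NSt \<omega>)"
    and y': "y' \<in> h2_dual (TS \<omega>)" and l_y': "vadd l y' \<in> H2Z"
    and z: "z \<in> m_dual (TB \<omega> B)"
    and z_rep: "madd (eB B (kappa d (a, l, b))) z \<in> MZ"
  shows "madd (msub z (eB B (0, y', 0))) (msmul (twist_corr d B (a, l, b) y') y) \<in> TB \<omega> B"
proof -
  let ?e = "eB B (0, y', 0)" and ?N = "twist_corr d B (a, l, b) y'"
  let ?u = "madd (msub z ?e) (msmul ?N y)"
  have a: "a \<in> \<int>" and b: "b \<in> \<int>"
    using NSt_dual_components[OF X] by auto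
  have N: "?N \<in> \<int>"
    using twist_corr_Ints[OF a b dB l_y'] .
  have W: "(of_nat d * a, \<lambda>i. vadd l y' i + a * vsmul (of_nat d) B i, 0) \<in> MZ"
    using a dB l_y' by (auto simp: MZ_def H2Z_def H2_def)
  have sum: "madd (eB B (kappa d (a, l, b))) ?e =
      madd (of_nat d * a, \<lambda>i. vadd l y' i + a * vsmul (of_nat d) B i, 0) (0, \<lambda>_. 0, ?N / of_nat d)"
    unfolding eB_kappa_plus_eB[OF d] by (simp add: madd_def)
  have "?u \<in> MZ"
    by (rule MZ_shift[OF z_rep sum W y_rep N d])
  moreover have "mpair ?u v = 0" if v: "v \<in> NSB \<omega> B" for v
  proof -
    have "mpair ?u v = mpair z v - mpair ?e v + ?N * mpair y v"
      by (simp add: mpair_madd_left mpair_msub_left mpair_msmul_left)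
    then show ?thesis
      using TB_dual_orth[OF z v] TB_dual_orth[OF y_dual v] TS_dual_eB_orth[OF y' v B_H2 dB d]
      by simp
  qed
  ultimately show ?thesis by (simp add: TB_def)
qed

theorem proposition2p5:
  fixes \<omega> :: "nat \<Rightarrow> complex" and B :: "nat \<Rightarrow> rat" and d :: nat
    and y :: "rat mv"
  assumes K3: "K3_period \<omega>"
    and B_H2: "B \<in> H2"
    and d_ord: "d = br_ord \<omega> B"
    and B_frac: "vsmul (of_nat d) B \<in> H2Z"
    and y_dual: "y \<in> m_dual (TB \<omega> B)"
    and y_rep: "madd (0, \<lambda>_. 0, - 1 / of_nat d) y \<in> MZ"
  shows "\<forall>X y' z.
           X \<in> m_dual (NSt \<omega>) \<longrightarrow>
           y' \<in> h2_dual (TS \<omega>) \<longrightarrow>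
           vadd (fst (snd X)) y' \<in> H2Z \<longrightarrow>
           z \<in> m_dual (TB \<omega> B) \<longrightarrow>
           madd (eB B (kappa d X)) z \<in> MZ \<longrightarrow>
           msub z (eB B (0, y', 0)) \<in> gen_by (TB \<omega> B) y"
proof (intro allI impI)
  fix X y' z
  assume X: "X \<in> m_dual (NSt \<omega>)" and y': "y' \<in> h2_dual (TS \<omega>)"
    and l_y': "vadd (fst (snd X)) y' \<in> H2Z" and z: "z \<in> m_dual (TB \<omega> B)"
    and z_rep: "madd (eB B (kappa d X)) z \<in> MZ"
  obtain a l b where X_eq: "X = (a, l, b)" by (cases X)
  have d: "d > 0" using br_ord_pos[OF B_H2] d_ord by simp
  have "twist_corr d B (a, l, b) y' \<in> \<int>"
    using NSt_dual_components X l_y' B_frac by (simp add: X_eq twist_corr_Ints)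
  then obtain k where k: "twist_corr d B (a, l, b) y' = of_int k" by (auto elim: Ints_cases)
  let ?u = "madd (msub z (eB B (0, y', 0))) (msmul (of_int k) y)"
  have "?u \<in> TB \<omega> B"
    using twisted_difference_in_TB[OF B_H2 B_frac d y_dual y_rep, of a l b y' z]
      X l_y' y' z z_rep by (simp add: X_eq k)
  moreover have "msub z (eB B (0, y', 0)) = madd ?u (msmul (of_int (- k)) y)"
    using madd_msmul_cancel[of "msub z (eB B (0, y', 0))" "of_int k" y] by simp
  ultimately show "msub z (eB B (0, y', 0)) \<in> gen_by (TB \<omega> B) y"
    unfolding gen_by_def by blast
qed

end
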